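(* Let $A,\mathbf v\in M_2(\mathbb C)$ and assume $\operatorname{spec}(A)\subset\{z\in\mathbb C:|\operatorname{Im} z|<\pi\}$. Then, with $\log$ the principal matrix logarithm, \[\frac{\mathrm d}{\mathrm dt}\log\big(\exp(A)\exp(t\mathbf v)\big)\Big|_{t=0}=\mathbf v+\tfrac12[A,\mathbf v]+\tfrac14\,\mathcal C(D_A)\,[A,[A,\mathbf v]]\] and \[\frac{\mathrm d}{\mathrm dt}\log\big(\exp(t\mathbf v)\exp(A)\big)\Big|_{t=0}=\mathbf v-\tfrac12[A,\mathbf v]+\tfrac14\,\mathcal C(D_A)\,[A,[A,\mathbf v]].\]
   Context: $[X,Y]=XY-YX$. For a $2\times2$ matrix $A$, $D_A=\det A-\frac{(\operatorname{tr}A)^2}{4}$. $\operatorname{Cos}$ and $\operatorname{Sin}$ are the entire functions $\operatorname{Cos}(z)=\sum_{n\ge0}(-1)^n\frac{z^n}{(2n)!}$, $\operatorname{Sin}(z)=\sum_{n\ge0}(-1)^n\frac{z^n}{(2n+1)!}$ (so $\operatorname{Cos}(x)=\cos\sqrt x$, $\operatorname{Sin}(x)=\sin\sqrt x/\sqrt x$ for $x>0$), $\operatorname{Cot}=\operatorname{Cos}/\operatorname{Sin}$, and $\mathcal C(z)=\frac{1-\operatorname{Cot}(z)}{z}$, a meromorphic function holomorphic except at $z=k^2\pi^2$, $k\ge1$ integer, with $\mathcal C(0)=1/3$. *)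

theory Defs
  imports "HOL-Analysis.Analysis"
begin

type_synonym cmat2 = "complex^2^2"

primrec mpow :: "cmat2 \<Rightarrow> nat \<Rightarrow> cmat2" where
  "mpow A 0 = mat 1"
| "mpow A (Suc n) = A ** mpow A n"

definition mexp :: "cmat2 \<Rightarrow> cmat2" where
  "mexp A = (\<Sum>n. (1 / fact n) *\<^sub>R mpow A n)"

definition spec :: "cmat2 \<Rightarrow> complex set" where
  "spec A = {z. det (A - mat z) = 0}"

definition mlog :: "cmat2 \<Rightarrow> cmat2" where
  "mlog M = (THE X. mexp X = M \<and> (\<forall>z\<in>spec X. \<bar>Im z\<bar> < pi))"

definition comm :: "cmat2 \<Rightarrow> cmat2 \<Rightarrow> cmat2" where
  "comm X Y = X ** Y - Y ** X"

definition csmul :: "complex \<Rightarrow> cmat2 \<Rightarrow> cmat2" where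
  "csmul c M = (\<chi> i j. c * M $ i $ j)"

definition DA :: "cmat2 \<Rightarrow> complex" where
  "DA A = det A - (trace A)^2 / 4"

definition Cos :: "complex \<Rightarrow> complex" where
  "Cos z = (\<Sum>n. (-1)^n * z^n / of_nat (fact (2*n)))"

definition Sin :: "complex \<Rightarrow> complex" where
  "Sin z = (\<Sum>n. (-1)^n * z^n / of_nat (fact (2*n+1)))"

definition Cot :: "complex \<Rightarrow> complex" where
  "Cot z = Cos z / Sin z"

definition Ccal :: "complex \<Rightarrow> complex" where
  "Ccal z = (if z = 0 then 1/3 else (1 - Cot z) / z)"

end

theory Submission
  imports Defs
begin

text \<open>Write \<open>X = \<tau> + N\<close> with \<open>\<tau> = tr X / 2\<close> and \<open>N\<close> traceless. Since \<open>N\<^sup>2 = - D\<^sub>X\<close>, all power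
  series in \<open>X\<close> lie in the commutative algebra \<open>\<complex>[N]/(N\<^sup>2 + D\<^sub>X)\<close>; in particular
  \<open>exp X = e\<^sup>\<tau> (Cos D\<^sub>X + Sin D\<^sub>X \<cdot> N)\<close>. On the open set of matrices with spectrum in the strip
  \<open>|Im z| < \<pi>\<close>, \<open>exp\<close> is injective and \<open>Sin D\<^sub>X \<noteq> 0\<close>, so by the inverse function theorem the derivative
  of \<open>log\<close> at \<open>exp A\<close> inverts \<open>exp'(A)\<close>. The two formulas then amount to
  \<open>exp'(A)(v + [A,v]/2 + \<C>(D\<^sub>A)/4 [A,[A,v]]) = exp A \<cdot> v\<close> and its mirror image, polynomial identities
  in the entries once \<open>Cos = Sin \<cdot> (1 - \<C> z)\<close> and \<open>Sin' = - Sin \<cdot> \<C> / 2\<close> are used.\<close>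

section \<open>The entire functions \<open>Cos\<close> and \<open>Sin\<close>\<close>

definition Cos_coeff :: "nat \<Rightarrow> complex" where
  "Cos_coeff n = (-1)^n / of_nat (fact (2*n))"

definition Sin_coeff :: "nat \<Rightarrow> complex" where
  "Sin_coeff n = (-1)^n / of_nat (fact (2*n+1))"

lemma Cos_eq_powser: "Cos z = (\<Sum>n. Cos_coeff n * z^n)"
  unfolding Cos_def Cos_coeff_def by (simp add: field_simps)

lemma Sin_eq_powser: "Sin z = (\<Sum>n. Sin_coeff n * z^n)"
  unfolding Sin_def Sin_coeff_def by (simp add: field_simps)

lemma summable_powser_dominated_by_exp:
  fixes c :: "nat \<Rightarrow> complex"
  assumes "\<And>n. norm (c n) \<le> inverse (fact n)"
  shows "summable (\<lambda>n. c n * z^n)"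
proof (rule summable_comparison_test[OF _ summable_exp[of "norm z"]])
  show "\<exists>N. \<forall>n\<ge>N. norm (c n * z^n) \<le> inverse (fact n) * norm z ^ n"
    using assms by (auto simp: norm_mult norm_power intro!: mult_right_mono)
qed

lemma norm_Cos_coeff: "norm (Cos_coeff n) = inverse (fact (2*n))"
  by (simp add: Cos_coeff_def norm_mult norm_inverse norm_power divide_inverse del: fact_Suc)

lemma norm_Sin_coeff: "norm (Sin_coeff n) = inverse (fact (2*n+1))"
  by (simp add: Sin_coeff_def norm_mult norm_inverse norm_power divide_inverse del: fact_Suc)

lemma summable_Cos_powser: "summable (\<lambda>n. Cos_coeff n * z^n)"
  by (rule summable_powser_dominated_by_exp)
     (unfold norm_Cos_coeff, intro le_imp_inverse_le fact_mono, auto)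

lemma summable_Sin_powser: "summable (\<lambda>n. Sin_coeff n * z^n)"
  by (rule summable_powser_dominated_by_exp)
     (unfold norm_Sin_coeff, intro le_imp_inverse_le fact_mono, auto)

lemma Cos_sums: "(\<lambda>n. Cos_coeff n * z^n) sums Cos z"
  unfolding Cos_eq_powser by (rule summable_sums[OF summable_Cos_powser])

lemma Sin_sums: "(\<lambda>n. Sin_coeff n * z^n) sums Sin z"
  unfolding Sin_eq_powser by (rule summable_sums[OF summable_Sin_powser])

lemma Cos_0 [simp]: "Cos 0 = 1"
  unfolding Cos_eq_powser powser_zero by (simp add: Cos_coeff_def)

lemma Sin_0 [simp]: "Sin 0 = 1"
  unfolding Sin_eq_powser powser_zero by (simp add: Sin_coeff_def)

lemma diffs_Cos_coeff: "diffs Cos_coeff n = - Sin_coeff n / 2"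
proof -
  define F :: complex where "F = fact (2*n+1)"
  have F: "F \<noteq> 0"
    unfolding F_def by (rule fact_nonzero)
  have fact_eq: "(fact (2 * Suc n) :: complex) = 2 * of_nat (Suc n) * F"
    by (simp add: F_def algebra_simps)
  have "(of_nat (Suc n) :: complex) \<noteq> 0"
    by (metis of_nat_eq_0_iff Suc_neq_Zero)
  with F show ?thesis
    unfolding diffs_def Cos_coeff_def Sin_coeff_def of_nat_fact fact_eq F_def[symmetric]
    by (simp add: field_simps del: of_nat_Suc)
qed

lemma Cos_coeff_minus_Sin_coeff: "Cos_coeff n - Sin_coeff n = 2 * of_nat n * Sin_coeff n"
proof -
  define F :: complex where "F = fact (2*n)"
  have F: "F \<noteq> 0"
    unfolding F_def by (rule fact_nonzero)
  have fact_eq: "(fact (2*n+1) :: complex) = (2 * of_nat n + 1) * F"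
    by (simp add: F_def algebra_simps)
  define k :: complex where "k = 2 * of_nat n + 1"
  have "k = of_nat (Suc (2*n))"
    by (simp add: k_def)
  then have k: "k \<noteq> 0"
    by (metis of_nat_eq_0_iff Suc_neq_Zero)
  have "Cos_coeff n - Sin_coeff n = (-1)^n / F - (-1)^n / (k * F)"
    unfolding Cos_coeff_def Sin_coeff_def of_nat_fact fact_eq k_def[symmetric] F_def[symmetric] ..
  also have "\<dots> = (k - 1) * ((-1)^n / (k * F))"
    using F k by (simp add: field_simps)
  also have "\<dots> = 2 * of_nat n * Sin_coeff n"
    unfolding Sin_coeff_def of_nat_fact fact_eq k_def[symmetric] F_def[symmetric] by (simp add: k_def)
  finally show ?thesis .
qed

lemma has_field_derivative_Cos: "(Cos has_field_derivative - Sin z / 2) (at z)"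
proof -
  have "(\<lambda>n. diffs Cos_coeff n * z^n) sums (- Sin z / 2)"
    using sums_divide[OF sums_minus[OF Sin_sums[of z]], of 2] by (simp add: diffs_Cos_coeff)
  then have "- Sin z / 2 = (\<Sum>n. diffs Cos_coeff n * z^n)"
    by (rule sums_unique)
  with termdiffs_strong_converges_everywhere[OF summable_Cos_powser] show ?thesis
    unfolding Cos_eq_powser[abs_def] by simp
qed

lemma Sin_powser_deriv: "2 * z * (\<Sum>n. diffs Sin_coeff n * z^n) = Cos z - Sin z"
proof -
  define d where "d = (\<Sum>n. diffs Sin_coeff n * z^n)"
  define f where "f m = of_nat m * Sin_coeff m * z^m" for m
  have "(\<lambda>n. diffs Sin_coeff n * z^n) sums d"
    unfolding d_def by (rule summable_sums[OF termdiff_converges_all[OF summable_Sin_powser]])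
  then have "(\<lambda>n. z * (diffs Sin_coeff n * z^n)) sums (z * d)"
    by (rule sums_mult)
  moreover have "z * (diffs Sin_coeff n * z^n) = f (Suc n)" for n
    unfolding f_def diffs_def by (simp add: algebra_simps)
  ultimately have "(\<lambda>n. f (Suc n)) sums (z * d)"
    by simp
  then have "f sums (z * d + f 0)"
    by (simp only: sums_Suc_iff)
  then have "f sums (z * d)"
    by (simp add: f_def)
  then have "(\<lambda>n. 2 * f n) sums (2 * (z * d))"
    by (rule sums_mult)
  moreover have "2 * f n = Cos_coeff n * z^n - Sin_coeff n * z^n" for n
    unfolding f_def using Cos_coeff_minus_Sin_coeff[of n] by (simp add: algebra_simps)
  ultimately have "(\<lambda>n. Cos_coeff n * z^n - Sin_coeff n * z^n) sums (2 * (z * d))"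
    by simp
  with sums_diff[OF Cos_sums Sin_sums] have "Cos z - Sin z = 2 * (z * d)"
    by (rule sums_unique2)
  then show ?thesis
    unfolding d_def[symmetric] by (simp add: mult.assoc)
qed

lemma Cos_eq_Sin_Ccal:
  assumes "Sin z \<noteq> 0"
  shows "Cos z = Sin z * (1 - Ccal z * z)"
  using assms by (cases "z = 0") (simp_all add: Ccal_def Cot_def field_simps)

lemma has_field_derivative_Sin:
  assumes "Sin z \<noteq> 0"
  shows "(Sin has_field_derivative - Sin z * Ccal z / 2) (at z)"
proof -
  define d where "d = (\<Sum>n. diffs Sin_coeff n * z^n)"
  have "(Sin has_field_derivative d) (at z)"
    unfolding Sin_eq_powser[abs_def] d_def
    by (rule termdiffs_strong_converges_everywhere[OF summable_Sin_powser])
  moreover have "d = - Sin z * Ccal z / 2"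
  proof (cases "z = 0")
    case True
    have "(fact 3 :: complex) = 6"
      by (simp add: numeral_3_eq_3)
    then show ?thesis
      unfolding d_def True powser_zero by (simp add: diffs_def Sin_coeff_def Ccal_def)
  next
    case False
    then have "d = (Cos z - Sin z) / (2 * z)"
      using Sin_powser_deriv[of z, folded d_def] by (simp add: field_simps)
    also have "\<dots> = - Sin z * Ccal z / 2"
      using False assms by (simp add: Ccal_def Cot_def field_simps)
    finally show ?thesis .
  qed
  ultimately show ?thesis by simp
qed

lemma Cos_square: "Cos (w^2) = cos w"
proof -
  have "(\<lambda>n. cos_coeff n *\<^sub>R w^n) sums cos w"
    by (rule cos_converges)
  moreover have "strict_mono (\<lambda>n::nat. 2*n)"
    by (rule strict_monoI) simp
  moreover have "\<And>n. n \<notin> range (\<lambda>n::nat. 2*n) \<Longrightarrow> cos_coeff n *\<^sub>R w^n = 0"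
    by (auto simp: cos_coeff_def elim!: evenE)
  ultimately have "(\<lambda>n. cos_coeff (2*n) *\<^sub>R w^(2*n)) sums cos w"
    using sums_mono_reindex[of "\<lambda>n::nat. 2*n" "\<lambda>n. cos_coeff n *\<^sub>R w^n"] by simp
  moreover have "cos_coeff (2*n) *\<^sub>R w^(2*n) = Cos_coeff n * (w^2)^n" for n
    by (simp add: cos_coeff_def Cos_coeff_def scaleR_conv_of_real power_mult)
  ultimately have "(\<lambda>n. Cos_coeff n * (w^2)^n) sums cos w"
    by simp
  then show ?thesis
    using Cos_sums sums_unique2 by blast
qed

lemma Sin_square: "w * Sin (w^2) = sin w"
proof -
  have "(\<lambda>n. sin_coeff n *\<^sub>R w^n) sums sin w"
    by (rule sin_converges)
  moreover have "strict_mono (\<lambda>n::nat. 2*n+1)"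
    by (rule strict_monoI) simp
  moreover have "\<And>n. n \<notin> range (\<lambda>n::nat. 2*n+1) \<Longrightarrow> sin_coeff n *\<^sub>R w^n = 0"
    by (auto simp: sin_coeff_def elim!: oddE)
  ultimately have "(\<lambda>n. sin_coeff (2*n+1) *\<^sub>R w^(2*n+1)) sums sin w"
    using sums_mono_reindex[of "\<lambda>n::nat. 2*n+1" "\<lambda>n. sin_coeff n *\<^sub>R w^n"] by simp
  moreover have "sin_coeff (2*n+1) *\<^sub>R w^(2*n+1) = w * (Sin_coeff n * (w^2)^n)" for n
  proof -
    have "(w^n)^2 = (w^2)^n"
      by (metis power_mult mult.commute)
    then show ?thesis
      by (simp add: sin_coeff_def Sin_coeff_def scaleR_conv_of_real power_mult algebra_simps)
  qed
  ultimately have "(\<lambda>n. w * (Sin_coeff n * (w^2)^n)) sums sin w"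
    by simp
  with sums_mult[OF Sin_sums, of w] show ?thesis
    using sums_unique2 by blast
qed

lemma Cos_Sin_squared_add: "Cos z ^ 2 + z * Sin z ^ 2 = 1"
proof -
  obtain w where w: "z = w^2"
    by (metis power2_csqrt)
  have "Cos z ^ 2 + z * Sin z ^ 2 = cos w ^ 2 + (w * Sin (w^2))^2"
    unfolding w Cos_square by (simp add: power_mult_distrib)
  also have "\<dots> = 1"
    unfolding Sin_square by (rule sin_cos_squared_add2)
  finally show ?thesis .
qed

lemma Sin_square_nonzero:
  assumes "\<bar>Re w\<bar> < pi"
  shows "Sin (w^2) \<noteq> 0"
proof
  assume Sin: "Sin (w^2) = 0"
  then have "w \<noteq> 0"
    by auto
  from Sin have "sin w = 0"
    using Sin_square[of w] by simp
  then obtain n :: int where n: "w = of_real (n * pi)"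
    by (auto simp: sin_eq_0)
  with \<open>w \<noteq> 0\<close> have "1 \<le> \<bar>real_of_int n\<bar>"
    by (cases "n = 0") auto
  then have "pi \<le> \<bar>Re w\<bar>"
    using n by (simp add: abs_mult)
  with assms show False
    by simp
qed

lemma Cos_neg_square: "Cos (- (r^2)) = (exp r + exp (-r)) / 2"
proof -
  have "- (r^2) = (\<i>*r)^2"
    by (simp add: power_mult_distrib)
  then show ?thesis
    by (simp add: Cos_square cos_exp_eq add.commute)
qed

lemma Sin_neg_square: "2 * r * Sin (- (r^2)) = exp r - exp (-r)"
proof -
  have "- (r^2) = (\<i>*r)^2"
    by (simp add: power_mult_distrib)
  then have "2 * r * Sin (- (r^2)) = - 2 * \<i> * ((\<i>*r) * Sin ((\<i>*r)^2))"
    by (simp add: algebra_simps)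
  also have "\<dots> = - 2 * \<i> * sin (\<i>*r)"
    by (simp only: Sin_square)
  also have "\<dots> = exp r - exp (-r)"
    by (simp add: sin_exp_eq field_simps)
  finally show ?thesis .
qed

lemma abs_Im_csqrt: "\<bar>Im (csqrt z)\<bar> = sqrt ((cmod z - Re z) / 2)"
proof -
  have "0 \<le> sqrt ((cmod z - Re z) / 2)"
    using complex_Re_le_cmod[of z] by simp
  then show ?thesis
    by (simp add: abs_mult abs_sgn_eq)
qed

section \<open>The exponential of a \<open>2 \<times> 2\<close> matrix\<close>

lemma cmat2_eq_iff:
  "(X::cmat2) = Y \<longleftrightarrow> X$1$1 = Y$1$1 \<and> X$1$2 = Y$1$2 \<and> X$2$1 = Y$2$1 \<and> X$2$2 = Y$2$2"
  by (auto simp: vec_eq_iff forall_2)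

lemma cmat2_mult_nth [simp]: "((X::cmat2) ** Y) $ i $ j = X$i$1 * Y$1$j + X$i$2 * Y$2$j"
  by (simp add: matrix_matrix_mult_def sum_2)

lemma cmat2_mat_nth [simp]: "(mat z :: cmat2) $ i $ j = (if i = j then z else 0)"
  by (simp add: mat_def)

lemma csmul_nth [simp]: "csmul c M $ i $ j = c * M $ i $ j"
  by (simp add: csmul_def)

lemma trace_cmat2: "trace (X::cmat2) = X$1$1 + X$2$2"
  by (simp add: trace_def sum_2)

lemma csmul_matrix_mult: "csmul c X ** Y = csmul c (X ** Y)"
  by (simp add: cmat2_eq_iff algebra_simps)

lemma bounded_linear_cmat2_nth: "bounded_linear (\<lambda>X::cmat2. X $ i $ j)"
  by (rule bounded_linear_compose[of "\<lambda>v. v $ j" "\<lambda>X. X $ i"]) (rule bounded_linear_vec_nth)+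

lemma has_derivative_cmat2_nth [derivative_intros]:
  "((\<lambda>X::cmat2. X $ i $ j) has_derivative (\<lambda>W. W $ i $ j)) F"
  by (rule bounded_linear_imp_has_derivative[OF bounded_linear_cmat2_nth])

definition scalar_part :: "cmat2 \<Rightarrow> complex" where
  "scalar_part X = trace X / 2"

definition traceless_part :: "cmat2 \<Rightarrow> cmat2" where
  "traceless_part X = X - mat (scalar_part X)"

definition mat_lin :: "complex \<Rightarrow> complex \<Rightarrow> cmat2 \<Rightarrow> cmat2" where
  "mat_lin a b X = csmul a (mat 1) + csmul b (traceless_part X)"

lemmas cmat2_simps = cmat2_eq_iff trace_cmat2 det_2 DA_def mat_lin_def traceless_part_def scalar_part_def

lemma mat_lin_mult: "mat_lin a b X ** mat_lin c d X = mat_lin (a*c - DA X * b*d) (a*d + b*c) X"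
  by (simp add: cmat2_simps power2_eq_square field_simps)

lemma mat_lin_scalar_part: "mat_lin (scalar_part X) 1 X = X"
  by (simp add: cmat2_simps)

lemma mat_lin_1_0: "mat_lin 1 0 X = mat 1"
  by (simp add: cmat2_simps)

lemma csmul_mat_lin: "csmul e (mat_lin a b X) = mat_lin (e*a) (e*b) X"
  by (simp add: cmat2_simps algebra_simps)

lemma mat_lin_uminus: "mat_lin a b (- X) = mat_lin a (- b) X"
  by (simp add: cmat2_simps field_simps)

lemma DA_uminus: "DA (- X) = DA X"
  by (simp add: cmat2_simps power2_eq_square algebra_simps)

lemma scalar_part_uminus: "scalar_part (- X) = - scalar_part X"
  by (simp add: cmat2_simps field_simps)

lemma trace_mat_lin: "trace (mat_lin a b X) = 2 * a"
  by (simp add: cmat2_simps field_simps)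

lemma det_mat_lin: "det (mat_lin a b X) = a^2 + DA X * b^2"
  by (simp add: cmat2_simps power2_eq_square field_simps)

lemma mat_lin_cancel:
  assumes "b \<noteq> 0" "mat_lin a b X = mat_lin a b Y"
  shows "traceless_part X = traceless_part Y"
  using assms by (simp add: mat_lin_def cmat2_eq_iff)

lemma sums_mat_lin:
  assumes "f sums a" "g sums b"
  shows "(\<lambda>n. mat_lin (f n) (g n) X) sums mat_lin a b X"
proof -
  have lin: "bounded_linear (\<lambda>c. csmul c M)" for M :: cmat2
    unfolding linear_conv_bounded_linear[symmetric]
    by (rule linearI) (simp_all add: cmat2_eq_iff algebra_simps)
  show ?thesis
    unfolding mat_lin_def by (intro sums_add bounded_linear.sums[OF lin] assms)
qed

fun divdiff_pow :: "complex \<Rightarrow> complex \<Rightarrow> nat \<Rightarrow> complex" where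
  "divdiff_pow a b 0 = 0"
| "divdiff_pow a b (Suc n) = a * divdiff_pow a b n + b^n"

lemma divdiff_pow_Suc': "divdiff_pow a b (Suc n) = b * divdiff_pow a b n + a^n"
proof (induction n)
  case 0
  then show ?case
    by simp
next
  case (Suc n)
  have "divdiff_pow a b (Suc (Suc n)) = a * (b * divdiff_pow a b n + a^n) + b^Suc n"
    using Suc.IH by simp
  also have "\<dots> = b * (a * divdiff_pow a b n + b^n) + a^Suc n"
    by (simp add: algebra_simps)
  finally show ?case
    by simp
qed

lemma divdiff_pow_mult: "(a - b) * divdiff_pow a b n = a^n - b^n"
proof (induction n)
  case 0
  then show ?case
    by simp
next
  case (Suc n)
  have "(a - b) * divdiff_pow a b (Suc n) = a * ((a - b) * divdiff_pow a b n) + (a - b) * b^n"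
    by (simp add: algebra_simps)
  also have "\<dots> = a^Suc n - b^Suc n"
    unfolding Suc.IH by (simp add: algebra_simps)
  finally show ?case .
qed

lemma divdiff_pow_same: "divdiff_pow a a (Suc n) = of_nat (Suc n) * a^n"
  by (induction n) (simp_all add: algebra_simps)

lemma mpow_eq_mat_lin:
  assumes r: "r^2 = - DA X"
  defines "a \<equiv> scalar_part X + r" and "b \<equiv> scalar_part X - r"
  shows "mpow X n = mat_lin ((a^n + b^n) / 2) (divdiff_pow a b n) X"
proof (induction n)
  case 0
  show ?case
    by (simp add: mat_lin_1_0)
next
  case (Suc n)
  have "mpow X (Suc n) = mat_lin (scalar_part X) 1 X ** mat_lin ((a^n + b^n) / 2) (divdiff_pow a b n) X"
    by (simp add: mat_lin_scalar_part Suc.IH)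
  also have "\<dots> = mat_lin (scalar_part X * ((a^n + b^n) / 2) - DA X * divdiff_pow a b n)
                    (scalar_part X * divdiff_pow a b n + (a^n + b^n) / 2) X"
    by (simp add: mat_lin_mult)
  also have "scalar_part X * ((a^n + b^n) / 2) - DA X * divdiff_pow a b n = (a^Suc n + b^Suc n) / 2"
  proof -
    have "- DA X * divdiff_pow a b n = r^2 * divdiff_pow a b n"
      by (simp add: r)
    also have "\<dots> = r/2 * ((a - b) * divdiff_pow a b n)"
      by (simp add: a_def b_def power2_eq_square algebra_simps)
    finally have "- DA X * divdiff_pow a b n = r/2 * ((a - b) * divdiff_pow a b n)" .
    then show ?thesis
      unfolding divdiff_pow_mult by (simp add: a_def b_def algebra_simps)
  qed
  also have "scalar_part X * divdiff_pow a b n + (a^n + b^n) / 2 = divdiff_pow a b (Suc n)"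
    using divdiff_pow.simps(2)[of a b n] divdiff_pow_Suc'[of a b n]
    by (simp add: a_def b_def algebra_simps)
  finally show ?case .
qed

lemma exp_sums_complex: "(\<lambda>n. z^n / fact n) sums exp (z::complex)"
  using exp_converges[of z] by (simp add: scaleR_conv_of_real divide_inverse mult.commute)

lemma sums_divdiff_pow_exp:
  "(\<lambda>n. divdiff_pow a b n / fact n) sums (if a = b then exp a else (exp a - exp b) / (a - b))"
proof (cases "a = b")
  case True
  have "divdiff_pow a a (Suc n) / fact (Suc n) = a^n / fact n" for n
    unfolding divdiff_pow_same by (simp add: field_simps del: divdiff_pow.simps of_nat_Suc)
  then have "(\<lambda>n. divdiff_pow a a (Suc n) / fact (Suc n)) sums exp a"
    using exp_sums_complex by simp
  with True show ?thesis
    using sums_Suc_iff[of "\<lambda>n. divdiff_pow a a n / fact n" "exp a"] by simp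
next
  case False
  have "a - b \<noteq> 0"
    using False by simp
  have "divdiff_pow a b n / fact n = (a^n / fact n - b^n / fact n) / (a - b)" for n
  proof -
    have dd: "divdiff_pow a b n = (a^n - b^n) / (a - b)"
      using divdiff_pow_mult[of a b n] \<open>a - b \<noteq> 0\<close> by (simp add: eq_divide_eq mult.commute)
    show ?thesis
      unfolding dd using \<open>a - b \<noteq> 0\<close> by (simp add: field_simps)
  qed
  with False show ?thesis
    using sums_divide[OF sums_diff[OF exp_sums_complex exp_sums_complex], of a b "a - b"] by simp
qed

lemma sums_exp_Cos_neg_square:
  "(\<lambda>n. ((t + r)^n / fact n + (t - r)^n / fact n) / 2) sums (exp t * Cos (- (r^2)))"
proof -
  have "(\<lambda>n. ((t + r)^n / fact n + (t - r)^n / fact n) / 2) sums ((exp (t + r) + exp (t - r)) / 2)"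
    by (intro sums_divide sums_add exp_sums_complex)
  moreover have "(exp (t + r) + exp (t - r)) / 2 = exp t * Cos (- (r^2))"
    unfolding Cos_neg_square by (simp add: exp_add exp_diff exp_minus field_simps)
  ultimately show ?thesis
    by simp
qed

lemma sums_exp_Sin_neg_square:
  "(\<lambda>n. divdiff_pow (t + r) (t - r) n / fact n) sums (exp t * Sin (- (r^2)))"
proof -
  have "(if t + r = t - r then exp (t + r) else (exp (t + r) - exp (t - r)) / ((t + r) - (t - r)))
      = exp t * Sin (- (r^2))"
  proof (cases "r = 0")
    case True
    then show ?thesis
      by simp
  next
    case False
    have "exp (t + r) - exp (t - r) = exp t * (2 * r * Sin (- (r^2)))"
      unfolding Sin_neg_square by (simp add: exp_add exp_diff exp_minus field_simps)
    with False show ?thesis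
      by simp
  qed
  then show ?thesis
    using sums_divdiff_pow_exp[of "t + r" "t - r"] by simp
qed

lemma mexp_eq_mat_lin: "mexp X = csmul (exp (scalar_part X)) (mat_lin (Cos (DA X)) (Sin (DA X)) X)"
proof -
  define r where "r = csqrt (- DA X)"
  define a b where "a = scalar_part X + r" and "b = scalar_part X - r"
  have D: "DA X = - (r^2)"
    by (simp add: r_def)
  have "(1 / fact n) *\<^sub>R mpow X n = mat_lin ((a^n / fact n + b^n / fact n) / 2) (divdiff_pow a b n / fact n) X" for n
    unfolding mpow_eq_mat_lin[OF power2_csqrt] a_def b_def r_def
    by (simp add: cmat2_eq_iff mat_lin_def) (simp add: scaleR_conv_of_real field_simps)
  with sums_mat_lin[OF sums_exp_Cos_neg_square[of "scalar_part X" r] sums_exp_Sin_neg_square[of "scalar_part X" r]]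
  have "mexp X = mat_lin (exp (scalar_part X) * Cos (DA X)) (exp (scalar_part X) * Sin (DA X)) X"
    unfolding mexp_def D by (simp add: sums_iff a_def b_def)
  then show ?thesis
    by (simp add: csmul_mat_lin)
qed

lemma mexp_uminus_mult: "mexp (- X) ** mexp X = mat 1"
proof -
  let ?e = "exp (scalar_part X)" and ?C = "Cos (DA X)" and ?S = "Sin (DA X)"
  have "mexp (- X) ** mexp X = mat_lin (exp (- scalar_part X) * ?e * (?C^2 + DA X * ?S^2)) 0 X"
    unfolding mexp_eq_mat_lin DA_uminus scalar_part_uminus mat_lin_uminus csmul_mat_lin mat_lin_mult
    by (simp add: power2_eq_square algebra_simps)
  also have "\<dots> = mat 1"
    by (simp add: Cos_Sin_squared_add exp_minus mat_lin_1_0)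
  finally show ?thesis .
qed

lemma mexp_mult_uminus: "mexp X ** mexp (- X) = mat 1"
  using mexp_uminus_mult[of "- X"] by simp

lemma trace_mexp:
  assumes "r^2 = - DA X"
  shows "trace (mexp X) = exp (scalar_part X + r) + exp (scalar_part X - r)"
proof -
  have "DA X = - (r^2)"
    using assms by simp
  then show ?thesis
    unfolding mexp_eq_mat_lin csmul_mat_lin trace_mat_lin
    by (simp add: Cos_neg_square exp_add exp_diff exp_minus field_simps)
qed

lemma det_mexp: "det (mexp X) = exp (trace X)"
proof -
  have "det (mexp X) = exp (scalar_part X) ^ 2 * (Cos (DA X) ^ 2 + DA X * Sin (DA X) ^ 2)"
    unfolding mexp_eq_mat_lin csmul_mat_lin det_mat_lin by (simp add: power_mult_distrib algebra_simps)
  also have "\<dots> = exp (scalar_part X) * exp (scalar_part X)"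
    by (simp only: Cos_Sin_squared_add) (simp add: power2_eq_square)
  also have "\<dots> = exp (trace X)"
    by (simp add: scalar_part_def flip: exp_add)
  finally show ?thesis .
qed

section \<open>Injectivity of the exponential on the strip\<close>

lemma mem_spec_iff: "z \<in> spec X \<longleftrightarrow> (z - scalar_part X)^2 = - DA X"
proof -
  have "det (X - mat z) = (z - scalar_part X)^2 + DA X"
    by (simp add: cmat2_simps power2_eq_square field_simps)
  then show ?thesis
    unfolding spec_def mem_Collect_eq eq_neg_iff_add_eq_0 by simp
qed

definition spec_in_strip :: "cmat2 \<Rightarrow> bool" where
  "spec_in_strip X \<longleftrightarrow> (\<forall>z\<in>spec X. \<bar>Im z\<bar> < pi)"

lemma spec_in_strip_iff:
  assumes "r^2 = - DA X"
  shows "spec_in_strip X \<longleftrightarrow> \<bar>Im (scalar_part X)\<bar> + \<bar>Im r\<bar> < pi"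
proof -
  have "z \<in> spec X \<longleftrightarrow> z = scalar_part X + r \<or> z = scalar_part X - r" for z
    unfolding mem_spec_iff assms[symmetric] power2_eq_iff by (auto simp: algebra_simps)
  then have "spec X = {scalar_part X + r, scalar_part X - r}"
    by auto
  then have "spec_in_strip X \<longleftrightarrow>
      \<bar>Im (scalar_part X) + Im r\<bar> < pi \<and> \<bar>Im (scalar_part X) - Im r\<bar> < pi"
    by (simp add: spec_in_strip_def)
  also have "\<dots> \<longleftrightarrow> \<bar>Im (scalar_part X)\<bar> + \<bar>Im r\<bar> < pi"
    by (auto simp: abs_if)
  finally show ?thesis .
qed

lemma Sin_DA_nonzero:
  assumes "spec_in_strip X"
  shows "Sin (DA X) \<noteq> 0"
proof -
  define r where "r = csqrt (- DA X)"
  have r: "r^2 = - DA X"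
    by (simp add: r_def)
  then have "DA X = (\<i> * r)^2"
    by (simp add: power_mult_distrib)
  moreover have "\<bar>Re (\<i> * r)\<bar> < pi"
    using assms spec_in_strip_iff[OF r] by simp
  ultimately show ?thesis
    by (simp add: Sin_square_nonzero)
qed

lemma exp_eq_imp_eq_strip:
  fixes a b :: complex
  assumes "exp a = exp b" "\<bar>Im a\<bar> < pi" "\<bar>Im b\<bar> < pi"
  shows "a = b"
proof -
  have "- pi < Im a" "Im a \<le> pi" "- pi < Im b" "Im b \<le> pi"
    using assms(2,3) by (auto simp: abs_less_iff)
  then show ?thesis
    using assms(1) Ln_exp by metis
qed

lemma eq_or_swap_of_sum_prod_eq:
  fixes x y u w :: complex
  assumes "x + y = u + w" "x * y = u * w"
  shows "(x = u \<and> y = w) \<or> (x = w \<and> y = u)"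
proof -
  have y: "y = u + w - x"
    using assms(1) by (simp add: algebra_simps)
  have "(x - u) * (x - w) = 0"
    using assms(2) unfolding y by (simp add: algebra_simps)
  with y show ?thesis
    by auto
qed

text \<open>The eigenvalues \<open>scalar_part X \<plusminus> r\<close> of \<open>X\<close> are recovered from those of \<open>mexp X\<close> by injectivity
  of \<open>exp\<close> on the strip.\<close>

lemma mexp_eq_imp_scalar_part_DA_eq:
  assumes X: "spec_in_strip X" and Y: "spec_in_strip Y" and eq: "mexp X = mexp Y"
  shows "scalar_part X = scalar_part Y \<and> DA X = DA Y"
proof -
  define r s where "r = csqrt (- DA X)" and "s = csqrt (- DA Y)"
  define x1 x2 y1 y2 where "x1 = scalar_part X + r" and "x2 = scalar_part X - r"
    and "y1 = scalar_part Y + s" and "y2 = scalar_part Y - s"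
  have r: "r^2 = - DA X" and s: "s^2 = - DA Y"
    by (simp_all add: r_def s_def)
  have "x1 \<in> spec X" "x2 \<in> spec X" "y1 \<in> spec Y" "y2 \<in> spec Y"
    using r s by (simp_all add: mem_spec_iff x1_def x2_def y1_def y2_def)
  with X Y have strip: "\<bar>Im x1\<bar> < pi" "\<bar>Im x2\<bar> < pi" "\<bar>Im y1\<bar> < pi" "\<bar>Im y2\<bar> < pi"
    by (simp_all add: spec_in_strip_def)
  have sums: "x1 + x2 = trace X" "y1 + y2 = trace Y"
    by (simp_all add: x1_def x2_def y1_def y2_def scalar_part_def)
  have "exp x1 + exp x2 = exp y1 + exp y2"
    using trace_mexp[OF r] trace_mexp[OF s] eq by (simp add: x1_def x2_def y1_def y2_def)
  moreover have "exp x1 * exp x2 = exp y1 * exp y2"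
    using det_mexp[of X] det_mexp[of Y] eq sums by (simp flip: exp_add)
  ultimately have "(exp x1 = exp y1 \<and> exp x2 = exp y2) \<or> (exp x1 = exp y2 \<and> exp x2 = exp y1)"
    by (rule eq_or_swap_of_sum_prod_eq)
  then have "(x1 = y1 \<and> x2 = y2) \<or> (x1 = y2 \<and> x2 = y1)"
    using exp_eq_imp_eq_strip strip by blast
  then have sum: "x1 + x2 = y1 + y2" and prod: "x1 * x2 = y1 * y2"
    by (auto simp: ac_simps)
  from sum sums have scalar: "scalar_part X = scalar_part Y"
    by (simp add: scalar_part_def)
  have "x1 * x2 = scalar_part X ^ 2 - r^2" "y1 * y2 = scalar_part Y ^ 2 - s^2"
    by (simp_all add: x1_def x2_def y1_def y2_def power2_eq_square algebra_simps)
  with prod scalar r s show ?thesis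
    by simp
qed

lemma inj_on_mexp: "inj_on mexp {X. spec_in_strip X}"
proof (rule inj_onI, clarsimp)
  fix X Y
  assume "spec_in_strip X" and Y: "spec_in_strip Y" and eq: "mexp X = mexp Y"
  then have scalar: "scalar_part X = scalar_part Y" and D: "DA X = DA Y"
    using mexp_eq_imp_scalar_part_DA_eq by blast+
  have "traceless_part X = traceless_part Y"
    using eq Sin_DA_nonzero[OF Y]
    by (intro mat_lin_cancel[of "exp (scalar_part Y) * Sin (DA Y)" "exp (scalar_part Y) * Cos (DA Y)"])
       (simp_all add: mexp_eq_mat_lin csmul_mat_lin scalar D)
  with scalar show "X = Y"
    by (metis traceless_part_def diff_add_cancel)
qed

lemma mlog_mexp:
  assumes "spec_in_strip X"
  shows "mlog (mexp X) = X"
  unfolding mlog_def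
proof (rule the_equality)
  show "mexp X = mexp X \<and> (\<forall>z\<in>spec X. \<bar>Im z\<bar> < pi)"
    using assms by (simp add: spec_in_strip_def)
next
  fix Y
  assume "mexp Y = mexp X \<and> (\<forall>z\<in>spec Y. \<bar>Im z\<bar> < pi)"
  with assms show "Y = X"
    using inj_on_mexp by (auto simp: spec_in_strip_def inj_on_def)
qed

section \<open>The derivative of the exponential\<close>

lemma bounded_linear_scalar_part: "bounded_linear scalar_part"
  unfolding linear_conv_bounded_linear[symmetric]
  by (rule linearI) (simp_all add: scalar_part_def trace_cmat2, simp_all add: scaleR_conv_of_real field_simps)

lemma bounded_linear_traceless_part: "bounded_linear traceless_part"
  unfolding linear_conv_bounded_linear[symmetric]
  by (rule linearI)
     (simp_all add: traceless_part_def scalar_part_def trace_cmat2 cmat2_eq_iff,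
      simp_all add: scaleR_conv_of_real field_simps)

definition DA_deriv :: "cmat2 \<Rightarrow> cmat2 \<Rightarrow> complex" where
  "DA_deriv X W = - trace (traceless_part X ** traceless_part W)"

lemma has_derivative_DA: "(DA has_derivative DA_deriv X) (at X)"
proof -
  have "DA = (\<lambda>X. X$1$1 * X$2$2 - X$1$2 * X$2$1 - (1/4) * ((X$1$1 + X$2$2) * (X$1$1 + X$2$2)))"
    by (simp add: fun_eq_iff DA_def det_2 trace_cmat2 power2_eq_square)
  then show ?thesis
    by (rule ssubst)
       (rule has_derivative_eq_rhs,
        (rule has_derivative_diff has_derivative_mult has_derivative_add has_derivative_cmat2_nth
          has_derivative_const)+,
        simp add: fun_eq_iff DA_deriv_def cmat2_simps field_simps)
qed

lemma has_derivative_field_comp: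
  assumes "(f has_field_derivative f') (at (g x))" "(g has_derivative g') (at x)"
  shows "((\<lambda>y. f (g y)) has_derivative (\<lambda>h. f' * g' h)) (at x)"
  using has_derivative_compose[of g g' x UNIV f "(*) f'"] assms by (simp add: has_field_derivative_def)

lemma has_derivative_csmul:
  assumes "(f has_derivative f') (at x)" "(g has_derivative g') (at x)"
  shows "((\<lambda>x. csmul (f x) (g x)) has_derivative (\<lambda>h. csmul (f x) (g' h) + csmul (f' h) (g x))) (at x)"
proof -
  have "bounded_bilinear csmul"
    unfolding bilinear_conv_bounded_bilinear[symmetric] bilinear_def
    by (auto intro!: linearI simp: cmat2_eq_iff algebra_simps)
  from bounded_bilinear.FDERIV[OF this assms] show ?thesis .
qed

text \<open>With \<open>c = Cos (DA X)\<close>, \<open>s = Sin (DA X)\<close> and \<open>s'\<close> the derivative of \<open>Sin\<close> at \<open>DA X\<close>,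
  \<open>exp (scalar_part X)\<close> times this is the derivative of \<open>mexp\<close> at \<open>X\<close> in direction \<open>W\<close>
  (recall \<open>Cos' = - Sin / 2\<close>).\<close>

definition dexp_factor :: "complex \<Rightarrow> complex \<Rightarrow> complex \<Rightarrow> cmat2 \<Rightarrow> cmat2 \<Rightarrow> cmat2" where
  "dexp_factor c s s' X W =
     mat_lin (scalar_part W * c - s / 2 * DA_deriv X W) (scalar_part W * s + s' * DA_deriv X W) X
     + csmul s (traceless_part W)"

definition mexp_deriv :: "cmat2 \<Rightarrow> cmat2 \<Rightarrow> cmat2" where
  "mexp_deriv X W = csmul (exp (scalar_part X))
     (dexp_factor (Cos (DA X)) (Sin (DA X)) (- Sin (DA X) * Ccal (DA X) / 2) X W)"

lemma has_derivative_mexp: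
  assumes "Sin (DA X) \<noteq> 0"
  shows "(mexp has_derivative mexp_deriv X) (at X)"
proof -
  have e: "((\<lambda>Y. exp (scalar_part Y)) has_derivative (\<lambda>W. exp (scalar_part X) * scalar_part W)) (at X)"
    by (rule has_derivative_field_comp[OF DERIV_exp bounded_linear_imp_has_derivative[OF bounded_linear_scalar_part]])
  have c: "((\<lambda>Y. Cos (DA Y)) has_derivative (\<lambda>W. - Sin (DA X) / 2 * DA_deriv X W)) (at X)"
    by (rule has_derivative_field_comp[OF has_field_derivative_Cos has_derivative_DA])
  have s: "((\<lambda>Y. Sin (DA Y)) has_derivative (\<lambda>W. - Sin (DA X) * Ccal (DA X) / 2 * DA_deriv X W)) (at X)"
    by (rule has_derivative_field_comp[OF has_field_derivative_Sin[OF assms] has_derivative_DA])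
  have n: "(traceless_part has_derivative traceless_part) (at X)"
    by (rule bounded_linear_imp_has_derivative[OF bounded_linear_traceless_part])
  have "((\<lambda>Y. csmul (exp (scalar_part Y)) (csmul (Cos (DA Y)) (mat 1) + csmul (Sin (DA Y)) (traceless_part Y)))
          has_derivative mexp_deriv X) (at X)"
    by (rule has_derivative_eq_rhs[OF has_derivative_csmul[OF e has_derivative_add[OF
          has_derivative_csmul[OF c has_derivative_const] has_derivative_csmul[OF s n]]]])
       (simp add: fun_eq_iff mexp_deriv_def dexp_factor_def mat_lin_def cmat2_eq_iff algebra_simps)
  then show ?thesis
    by (simp add: mexp_eq_mat_lin[abs_def] mat_lin_def)
qed

lemma mexp_0: "mexp 0 = mat 1"
  by (simp add: mexp_eq_mat_lin cmat2_simps)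

lemma mexp_deriv_0: "mexp_deriv 0 = (\<lambda>W. W)"
  by (simp add: fun_eq_iff mexp_deriv_def dexp_factor_def DA_deriv_def cmat2_simps)

lemma bounded_linear_cmat2_mult_left: "bounded_linear (\<lambda>Y::cmat2. (M::cmat2) ** Y)"
  unfolding linear_conv_bounded_linear[symmetric]
  by (rule linearI) (simp_all add: cmat2_eq_iff algebra_simps)

lemma bounded_linear_cmat2_mult_right: "bounded_linear (\<lambda>Y::cmat2. Y ** (M::cmat2))"
  unfolding linear_conv_bounded_linear[symmetric]
  by (rule linearI) (simp_all add: cmat2_eq_iff algebra_simps)

lemma has_vector_derivative_comp_mexp:
  assumes F: "bounded_linear F" and g: "(g has_derivative g') (at (F (mat 1)))"
  shows "((\<lambda>t::real. g (F (mexp (t *\<^sub>R v)))) has_vector_derivative g' (F v)) (at 0)"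
proof -
  have "((\<lambda>t::real. t *\<^sub>R v) has_derivative (\<lambda>t. t *\<^sub>R v)) (at 0)"
    by (rule bounded_linear_imp_has_derivative[OF bounded_linear_scaleR_left])
  moreover have "(mexp has_derivative (\<lambda>W. W)) (at ((0::real) *\<^sub>R v))"
    using has_derivative_mexp[of 0] by (simp add: mexp_deriv_0 cmat2_simps)
  ultimately have "((\<lambda>t::real. mexp (t *\<^sub>R v)) has_derivative (\<lambda>t. t *\<^sub>R v)) (at 0)"
    by (rule has_derivative_compose)
  then have "((\<lambda>t::real. F (mexp (t *\<^sub>R v))) has_derivative (\<lambda>t. F (t *\<^sub>R v))) (at 0)"
    by (rule bounded_linear.has_derivative[OF F])
  moreover have "(g has_derivative g') (at (F (mexp ((0::real) *\<^sub>R v))))"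
    using g by (simp add: mexp_0)
  ultimately have "((\<lambda>t::real. g (F (mexp (t *\<^sub>R v)))) has_derivative (\<lambda>t. g' (F (t *\<^sub>R v)))) (at 0)"
    by (rule has_derivative_compose)
  moreover have "g' (F (t *\<^sub>R v)) = t *\<^sub>R g' (F v)" for t
    using linear_scale[OF bounded_linear.linear[OF F]] linear_scale[OF has_derivative_linear[OF g]] by simp
  ultimately show ?thesis
    by (simp add: has_vector_derivative_def)
qed

section \<open>The derivative of the logarithm\<close>

definition dlog_left :: "complex \<Rightarrow> cmat2 \<Rightarrow> cmat2 \<Rightarrow> cmat2" where
  "dlog_left q A v = v + (1/2) *\<^sub>R comm A v + csmul (q / 4) (comm A (comm A v))"

definition dlog_right :: "complex \<Rightarrow> cmat2 \<Rightarrow> cmat2 \<Rightarrow> cmat2" where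
  "dlog_right q A v = v - (1/2) *\<^sub>R comm A v + csmul (q / 4) (comm A (comm A v))"

lemma DA_deriv_eq:
  "DA_deriv X W = X$1$1 * W$2$2 + W$1$1 * X$2$2 - X$1$2 * W$2$1 - W$1$2 * X$2$1 - trace X * trace W / 2"
  by (simp add: DA_deriv_def cmat2_simps field_simps)

lemma dexp_factor_dlog_left:
  assumes "c = s * (1 - q * DA X)"
  shows "dexp_factor c s (- s * q / 2) X (dlog_left q X v) = mat_lin c s X ** v"
  unfolding assms dexp_factor_def dlog_left_def DA_deriv_eq mat_lin_def
  by (simp add: cmat2_simps comm_def power2_eq_square) (simp add: scaleR_conv_of_real field_simps)

lemma dexp_factor_dlog_right:
  assumes "c = s * (1 - q * DA X)"
  shows "dexp_factor c s (- s * q / 2) X (dlog_right q X v) = v ** mat_lin c s X"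
  unfolding assms dexp_factor_def dlog_right_def DA_deriv_eq mat_lin_def
  by (simp add: cmat2_simps comm_def power2_eq_square) (simp add: scaleR_conv_of_real field_simps)

lemma mexp_deriv_dlog_left:
  assumes "Sin (DA X) \<noteq> 0"
  shows "mexp_deriv X (dlog_left (Ccal (DA X)) X v) = mexp X ** v"
  unfolding mexp_deriv_def dexp_factor_dlog_left[OF Cos_eq_Sin_Ccal[OF assms]]
  by (simp add: mexp_eq_mat_lin csmul_matrix_mult)

lemma mexp_deriv_dlog_right:
  assumes "Sin (DA X) \<noteq> 0"
  shows "mexp_deriv X (dlog_right (Ccal (DA X)) X v) = v ** mexp X"
  unfolding mexp_deriv_def dexp_factor_dlog_right[OF Cos_eq_Sin_Ccal[OF assms]]
  by (simp add: mexp_eq_mat_lin cmat2_eq_iff algebra_simps)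

lemma mexp_deriv_right_inverse:
  assumes "Sin (DA A) \<noteq> 0"
  shows "mexp_deriv A (dlog_left (Ccal (DA A)) A (mexp (- A) ** Z)) = Z"
  by (simp add: mexp_deriv_dlog_left[OF assms] matrix_mul_assoc mexp_mult_uminus)

lemma open_spec_in_strip: "open {X. spec_in_strip X}"
proof -
  have "{X. spec_in_strip X} = {X. \<bar>Im (scalar_part X)\<bar> + sqrt ((cmod (- DA X) - Re (- DA X)) / 2) < pi}"
    unfolding spec_in_strip_iff[OF power2_csqrt] abs_Im_csqrt by (rule refl)
  moreover have "continuous_on UNIV DA"
    by (intro continuous_at_imp_continuous_on ballI has_derivative_continuous[OF has_derivative_DA])
  moreover have "continuous_on UNIV scalar_part"
    by (rule linear_continuous_on[OF bounded_linear_scalar_part])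
  ultimately show ?thesis
    by (auto intro!: open_Collect_less continuous_intros)
qed

lemma has_derivative_mlog:
  assumes "spec_in_strip A"
  shows "(mlog has_derivative (\<lambda>Z. dlog_left (Ccal (DA A)) A (mexp (- A) ** Z))) (at (mexp A))"
proof -
  have "continuous_on {X. spec_in_strip X} mexp"
    by (intro continuous_at_imp_continuous_on ballI has_derivative_continuous[OF has_derivative_mexp]
        Sin_DA_nonzero) simp
  moreover have "(mexp has_derivative mexp_deriv A) (at A)"
    by (rule has_derivative_mexp[OF Sin_DA_nonzero[OF assms]])
  moreover have "mexp_deriv A \<circ> (\<lambda>Z. dlog_left (Ccal (DA A)) A (mexp (- A) ** Z)) = id"
    by (simp add: fun_eq_iff mexp_deriv_right_inverse Sin_DA_nonzero[OF assms])
  moreover have "A \<in> {X. spec_in_strip X}"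
    using assms by simp
  ultimately show ?thesis
    using has_derivative_inverse_strong[OF open_spec_in_strip, of A mexp mlog] by (simp add: mlog_mexp)
qed

lemma dlog_left_conj_mexp:
  assumes "spec_in_strip A"
  shows "dlog_left (Ccal (DA A)) A (mexp (- A) ** (v ** mexp A)) = dlog_right (Ccal (DA A)) A v"
proof -
  have S: "Sin (DA A) \<noteq> 0"
    by (rule Sin_DA_nonzero[OF assms])
  have "linear (mexp_deriv A)"
    by (rule has_derivative_linear[OF has_derivative_mexp[OF S]])
  moreover have "surj (mexp_deriv A)"
    by (rule surjI[where f = "\<lambda>Z. dlog_left (Ccal (DA A)) A (mexp (- A) ** Z)"])
       (rule mexp_deriv_right_inverse[OF S])
  ultimately have "inj (mexp_deriv A)"
    by (rule linear_surj_imp_inj)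
  moreover have "mexp_deriv A (dlog_left (Ccal (DA A)) A (mexp (- A) ** (v ** mexp A)))
      = mexp_deriv A (dlog_right (Ccal (DA A)) A v)"
    by (simp only: mexp_deriv_right_inverse[OF S] mexp_deriv_dlog_right[OF S])
  ultimately show ?thesis
    by (simp add: inj_eq)
qed

theorem lemma3p1:
  fixes A v :: cmat2
  assumes "\<forall>z\<in>spec A. \<bar>Im z\<bar> < pi"
  shows "((\<lambda>t::real. mlog (mexp A ** mexp (t *\<^sub>R v))) has_vector_derivative
            (v + (1/2) *\<^sub>R comm A v + csmul (Ccal (DA A) / 4) (comm A (comm A v)))) (at 0)
       \<and> ((\<lambda>t::real. mlog (mexp (t *\<^sub>R v) ** mexp A)) has_vector_derivative
            (v - (1/2) *\<^sub>R comm A v + csmul (Ccal (DA A) / 4) (comm A (comm A v)))) (at 0)"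
proof -
  have A: "spec_in_strip A"
    using assms unfolding spec_in_strip_def .
  have dlog: "(mlog has_derivative (\<lambda>Z. dlog_left (Ccal (DA A)) A (mexp (- A) ** Z))) (at (mexp A))"
    by (rule has_derivative_mlog[OF A])
  have "((\<lambda>t::real. mlog (mexp A ** mexp (t *\<^sub>R v))) has_vector_derivative
          dlog_left (Ccal (DA A)) A (mexp (- A) ** (mexp A ** v))) (at 0)"
    by (rule has_vector_derivative_comp_mexp[where F = "\<lambda>Y. mexp A ** Y", OF bounded_linear_cmat2_mult_left])
       (simp add: dlog)
  then have left: "((\<lambda>t::real. mlog (mexp A ** mexp (t *\<^sub>R v))) has_vector_derivative
          dlog_left (Ccal (DA A)) A v) (at 0)"
    by (simp add: matrix_mul_assoc mexp_uminus_mult)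
  have "((\<lambda>t::real. mlog (mexp (t *\<^sub>R v) ** mexp A)) has_vector_derivative
          dlog_left (Ccal (DA A)) A (mexp (- A) ** (v ** mexp A))) (at 0)"
    by (rule has_vector_derivative_comp_mexp[where F = "\<lambda>Y. Y ** mexp A", OF bounded_linear_cmat2_mult_right])
       (simp add: dlog)
  then have right: "((\<lambda>t::real. mlog (mexp (t *\<^sub>R v) ** mexp A)) has_vector_derivative
          dlog_right (Ccal (DA A)) A v) (at 0)"
    by (simp only: dlog_left_conj_mexp[OF A])
  from left right show ?thesis
    by (simp add: dlog_left_def dlog_right_def)
qed

end
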